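(* Let $\Omega\subset\mathbb R^d$ be a bounded Borel set, $f:\Omega\to[0,\infty)$ with $\int_\Omega f=1$, $p\ge1$, $x_1,\dots,x_k\in\Omega$, and $h_1,\dots,h_k:[0,1]\to[0,\infty)$ strictly increasing. Then every equilibrium is a Pareto optimum.
   Context: A partition of $\Omega$ is a family of Borel sets pairwise disjoint up to $f$-negligible sets whose union has full $f\,dx$-measure. For a partition $(B_i)_{i=1}^k$, $C(x,(B_i)_i)=\sum_{i=1}^k[|x-x_i|^p+h_i(\int_{B_i}f\,dx)]\mathbf 1_{B_i}(x)$. A partition $(A_i)$ is an equilibrium if, with $c_j=\int_{A_j}f$, for every $i$: $A_i=\{x:|x-x_i|^p+h_i(c_i)<|x-x_j|^p+h_j(c_j)\ \forall j\ne i\}$ up to $f$-negligible sets. A partition $(A_i)$ is a Pareto optimum if there is no partition $(B_i)_{i=1}^k$ with $C(x,(B_i)_i)\le C(x,(A_i)_i)$ for $f$-a.e. $x$ and strict inequality on a set of positive $f\,dx$-measure. *)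

theory Defs
  imports "HOL-Analysis.Analysis"
begin

text \<open>The measure f dx on the ambient space (f extended by zero outside Omega).
  A set N is f-negligible iff it has measure zero for this measure.\<close>
definition fmeas :: "'a::euclidean_space set \<Rightarrow> ('a \<Rightarrow> real) \<Rightarrow> 'a measure" where
  "fmeas \<Omega> f = density lebesgue (\<lambda>x. ennreal (f x * indicator \<Omega> x))"

definition fmass :: "'a::euclidean_space set \<Rightarrow> ('a \<Rightarrow> real) \<Rightarrow> 'a set \<Rightarrow> real" where
  "fmass \<Omega> f B = (\<integral>x\<in>(B \<inter> \<Omega>). f x \<partial>lebesgue)"

definition is_partition ::
  "'a::euclidean_space set \<Rightarrow> ('a \<Rightarrow> real) \<Rightarrow> nat \<Rightarrow> (nat \<Rightarrow> 'a set) \<Rightarrow> bool" where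
  "is_partition \<Omega> f k B \<longleftrightarrow>
     (\<forall>i\<in>{1..k}. B i \<in> sets borel) \<and>
     (\<forall>i\<in>{1..k}. \<forall>j\<in>{1..k}. i \<noteq> j \<longrightarrow> emeasure (fmeas \<Omega> f) (B i \<inter> B j) = 0) \<and>
     emeasure (fmeas \<Omega> f) (UNIV - (\<Union>i\<in>{1..k}. B i)) = 0"

definition cost ::
  "'a::euclidean_space set \<Rightarrow> ('a \<Rightarrow> real) \<Rightarrow> nat \<Rightarrow> (nat \<Rightarrow> 'a) \<Rightarrow> real \<Rightarrow>
   (nat \<Rightarrow> real \<Rightarrow> real) \<Rightarrow> (nat \<Rightarrow> 'a set) \<Rightarrow> 'a \<Rightarrow> real" where
  "cost \<Omega> f k xs p h B x =
     (\<Sum>i\<in>{1..k}. (norm (x - xs i) powr p + h i (fmass \<Omega> f (B i))) * indicator (B i) x)"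

definition is_equilibrium ::
  "'a::euclidean_space set \<Rightarrow> ('a \<Rightarrow> real) \<Rightarrow> nat \<Rightarrow> (nat \<Rightarrow> 'a) \<Rightarrow> real \<Rightarrow>
   (nat \<Rightarrow> real \<Rightarrow> real) \<Rightarrow> (nat \<Rightarrow> 'a set) \<Rightarrow> bool" where
  "is_equilibrium \<Omega> f k xs p h A \<longleftrightarrow>
     is_partition \<Omega> f k A \<and>
     (\<forall>i\<in>{1..k}.
        (let E = {x. \<forall>j\<in>{1..k}. j \<noteq> i \<longrightarrow>
                     norm (x - xs i) powr p + h i (fmass \<Omega> f (A i))
                       < norm (x - xs j) powr p + h j (fmass \<Omega> f (A j))}
         in emeasure (fmeas \<Omega> f) ((A i - E) \<union> (E - A i)) = 0))"

definition is_pareto ::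
  "'a::euclidean_space set \<Rightarrow> ('a \<Rightarrow> real) \<Rightarrow> nat \<Rightarrow> (nat \<Rightarrow> 'a) \<Rightarrow> real \<Rightarrow>
   (nat \<Rightarrow> real \<Rightarrow> real) \<Rightarrow> (nat \<Rightarrow> 'a set) \<Rightarrow> bool" where
  "is_pareto \<Omega> f k xs p h A \<longleftrightarrow>
     is_partition \<Omega> f k A \<and>
     \<not> (\<exists>B. is_partition \<Omega> f k B \<and>
            (AE x in fmeas \<Omega> f. cost \<Omega> f k xs p h B x \<le> cost \<Omega> f k xs p h A x) \<and>
            emeasure (fmeas \<Omega> f) {x. cost \<Omega> f k xs p h B x < cost \<Omega> f k xs p h A x} > 0)"

end

theory Submission
  imports Defs
begin

text \<open>Let \<open>A\<close> be an equilibrium and let \<open>B\<close> be a partition whose cost is a.e. at most that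
  of \<open>A\<close>. In an equilibrium every agent sits in a cell of least cost, so a.e. the cost of \<open>A\<close> is
  the minimum over \<open>i\<close> of \<open>|x - x\<^sub>i|\<^sup>p + h\<^sub>i(c\<^sub>i)\<close>. If some cell of \<open>B\<close> had more mass than
  the corresponding cell of \<open>A\<close>, strict monotonicity of \<open>h\<^sub>i\<close> would make every agent of that cell
  strictly worse off, so the cell would be negligible and have mass \<open>0\<close>, a contradiction. Hence
  no cell gains mass; since both mass vectors sum to \<open>1\<close>, the masses coincide, and then the
  cost of \<open>B\<close> is a.e. at least that of \<open>A\<close>, so \<open>B\<close> is not a strict improvement.\<close>

definition cell_cost ::
  "'a::euclidean_space set \<Rightarrow> ('a \<Rightarrow> real) \<Rightarrow> (nat \<Rightarrow> 'a) \<Rightarrow> real \<Rightarrow>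
   (nat \<Rightarrow> real \<Rightarrow> real) \<Rightarrow> (nat \<Rightarrow> 'a set) \<Rightarrow> nat \<Rightarrow> 'a \<Rightarrow> real" where
  "cell_cost \<Omega> f xs p h B i x = norm (x - xs i) powr p + h i (fmass \<Omega> f (B i))"

lemma space_fmeas [simp]: "space (fmeas \<Omega> f) = UNIV"
  by (simp add: fmeas_def)

lemma sets_fmeas [simp]: "sets (fmeas \<Omega> f) = sets lebesgue"
  by (simp add: fmeas_def)

lemma sets_lebesgue_if_borel: "B \<in> sets borel \<Longrightarrow> B \<in> sets lebesgue"
  by (metis sets_completionI_sets sets_lborel)

lemma sum_indicator_single:
  fixes g :: "'i \<Rightarrow> 'b::ring_1"
  assumes "finite I" "j \<in> I" "x \<in> B j" "\<forall>i\<in>I. i \<noteq> j \<longrightarrow> x \<notin> B i"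
  shows "(\<Sum>i\<in>I. g i * indicator (B i) x) = g j"
proof -
  have "(\<Sum>i\<in>I. g i * indicator (B i) x) = (\<Sum>i\<in>{j}. g i * indicator (B i) x)"
    using assms by (intro sum.mono_neutral_right) auto
  then show ?thesis
    using assms by simp
qed

lemma is_partition_AE_single_cell:
  assumes "is_partition \<Omega> f k B"
  shows "AE x in fmeas \<Omega> f. \<exists>j\<in>{1..k}. x \<in> B j \<and> (\<forall>i\<in>{1..k}. i \<noteq> j \<longrightarrow> x \<notin> B i)"
proof -
  have B: "i \<in> {1..k} \<Longrightarrow> B i \<in> sets lebesgue" for i
    using assms sets_lebesgue_if_borel unfolding is_partition_def by blast
  have disjoint: "AE x in fmeas \<Omega> f. \<forall>i\<in>{1..k}. \<forall>j\<in>{1..k}. i \<noteq> j \<longrightarrow> x \<notin> B i \<inter> B j"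
  proof (intro AE_finite_allI finite_atLeastAtMost)
    fix i j assume "i \<in> {1..k}" "j \<in> {1..k}"
    then have "i \<noteq> j \<Longrightarrow> B i \<inter> B j \<in> null_sets (fmeas \<Omega> f)"
      using assms B unfolding is_partition_def null_sets_def by auto
    then show "AE x in fmeas \<Omega> f. i \<noteq> j \<longrightarrow> x \<notin> B i \<inter> B j"
      by (cases "i = j") (auto dest: AE_not_in)
  qed
  have "UNIV - (\<Union>i\<in>{1..k}. B i) \<in> null_sets (fmeas \<Omega> f)"
    using assms B unfolding is_partition_def null_sets_def by auto
  then have "AE x in fmeas \<Omega> f. x \<in> (\<Union>i\<in>{1..k}. B i)"
    by (auto dest: AE_not_in)
  with disjoint show ?thesis
    by eventually_elim blast
qed

lemma is_partition_AE_cost_eq_cell_cost: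
  assumes "is_partition \<Omega> f k B"
  shows "AE x in fmeas \<Omega> f. \<forall>j\<in>{1..k}. x \<in> B j \<longrightarrow>
           cost \<Omega> f k xs p h B x = cell_cost \<Omega> f xs p h B j x"
  using is_partition_AE_single_cell[OF assms]
proof eventually_elim
  case (elim x)
  show ?case
  proof (intro ballI impI)
    fix j assume "j \<in> {1..k}" "x \<in> B j"
    from elim obtain j' where j': "j' \<in> {1..k}" "x \<in> B j'"
      "\<forall>i\<in>{1..k}. i \<noteq> j' \<longrightarrow> x \<notin> B i"
      by blast
    with \<open>j \<in> {1..k}\<close> \<open>x \<in> B j\<close> have "j = j'"
      by auto
    with j' show "cost \<Omega> f k xs p h B x = cell_cost \<Omega> f xs p h B j x"
      unfolding cost_def cell_cost_def by (intro sum_indicator_single) auto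
  qed
qed

lemma AE_lebesgue_if_AE_fmeas:
  assumes "set_integrable lebesgue \<Omega> f" "\<forall>x\<in>\<Omega>. f x \<ge> 0"
    and "AE x in fmeas \<Omega> f. P x"
  shows "AE x in lebesgue. x \<in> \<Omega> \<and> f x \<noteq> 0 \<longrightarrow> P x"
proof -
  have "(\<lambda>x. f x * indicator \<Omega> x) \<in> borel_measurable lebesgue"
    using assms(1) by (simp add: set_integrable_def mult.commute)
  then have "AE x in lebesgue. 0 < ennreal (f x * indicator \<Omega> x) \<longrightarrow> P x"
    using assms(3) unfolding fmeas_def by (simp add: AE_density)
  then show ?thesis
    by eventually_elim (use assms(2) in \<open>force simp: indicator_def\<close>)
qed

lemma fmass_eq_integral:
  "fmass \<Omega> f B = (\<integral>x. indicator \<Omega> x * f x * indicator B x \<partial>lebesgue)"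
  unfolding fmass_def set_lebesgue_integral_def
  by (intro Bochner_Integration.integral_cong) (auto simp: indicator_def)

lemma fmass_nonneg: "\<forall>x\<in>\<Omega>. f x \<ge> 0 \<Longrightarrow> fmass \<Omega> f B \<ge> 0"
  unfolding fmass_eq_integral
  by (intro Bochner_Integration.integral_nonneg) (auto simp: indicator_def)

lemma integrable_restrict_density:
  fixes f :: "'a::euclidean_space \<Rightarrow> real"
  assumes "set_integrable lebesgue \<Omega> f" "B \<in> sets borel"
  shows "integrable lebesgue (\<lambda>x. indicator \<Omega> x * f x * indicator B x)"
  using integrable_mult_indicator[where f="\<lambda>x. indicator \<Omega> x *\<^sub>R f x",
      OF sets_lebesgue_if_borel[OF assms(2)] assms(1)[unfolded set_integrable_def]]
  by (simp add: mult.commute)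

lemma fmass_eq_0_if_AE_notin:
  assumes "set_integrable lebesgue \<Omega> f" "\<forall>x\<in>\<Omega>. f x \<ge> 0"
    and "AE x in fmeas \<Omega> f. x \<notin> B"
  shows "fmass \<Omega> f B = 0"
proof -
  have "AE x in lebesgue. indicator \<Omega> x * f x * indicator B x = (0::real)"
    using AE_lebesgue_if_AE_fmeas[OF assms] by eventually_elim (auto simp: indicator_def)
  then show ?thesis
    unfolding fmass_eq_integral by (rule integral_eq_zero_AE)
qed

lemma sum_fmass_partition:
  assumes "set_integrable lebesgue \<Omega> f" "\<forall>x\<in>\<Omega>. f x \<ge> 0"
    and "is_partition \<Omega> f k B"
  shows "(\<Sum>i\<in>{1..k}. fmass \<Omega> f (B i)) = (\<integral>x\<in>\<Omega>. f x \<partial>lebesgue)"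
proof -
  let ?F = "\<lambda>x. indicator \<Omega> x * f x :: real"
  have int: "i \<in> {1..k} \<Longrightarrow> integrable lebesgue (\<lambda>x. ?F x * indicator (B i) x)" for i
    using assms(3) integrable_restrict_density[OF assms(1)] unfolding is_partition_def by blast
  have "AE x in lebesgue. x \<in> \<Omega> \<and> f x \<noteq> 0 \<longrightarrow>
      (\<exists>j\<in>{1..k}. x \<in> B j \<and> (\<forall>i\<in>{1..k}. i \<noteq> j \<longrightarrow> x \<notin> B i))"
    using AE_lebesgue_if_AE_fmeas[OF assms(1,2) is_partition_AE_single_cell[OF assms(3)]] .
  then have cover: "AE x in lebesgue. (\<Sum>i\<in>{1..k}. ?F x * indicator (B i) x) = ?F x"
  proof eventually_elim
    case (elim x)
    show ?case
    proof (cases "x \<in> \<Omega> \<and> f x \<noteq> 0")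
      case True
      with elim obtain j where "j \<in> {1..k}" "x \<in> B j" "\<forall>i\<in>{1..k}. i \<noteq> j \<longrightarrow> x \<notin> B i"
        by blast
      then show ?thesis
        by (intro sum_indicator_single) auto
    next
      case False
      then have "?F x = 0"
        by (simp add: indicator_def)
      then show ?thesis
        by simp
    qed
  qed
  have "(\<Sum>i\<in>{1..k}. fmass \<Omega> f (B i)) = (\<integral>x. (\<Sum>i\<in>{1..k}. ?F x * indicator (B i) x) \<partial>lebesgue)"
    unfolding fmass_eq_integral using int by (intro Bochner_Integration.integral_sum[symmetric])
  also have "\<dots> = (\<integral>x. ?F x \<partial>lebesgue)"
  proof (rule integral_cong_AE[OF _ _ cover])
    show "(\<lambda>x. \<Sum>i\<in>{1..k}. ?F x * indicator (B i) x) \<in> borel_measurable lebesgue"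
      using int by (intro borel_measurable_sum) auto
    show "?F \<in> borel_measurable lebesgue"
      using assms(1) by (simp add: set_integrable_def)
  qed
  finally show ?thesis
    by (simp add: set_lebesgue_integral_def)
qed

lemma fmass_partition_le:
  assumes "set_integrable lebesgue \<Omega> f" "\<forall>x\<in>\<Omega>. f x \<ge> 0"
    and "is_partition \<Omega> f k B" "i \<in> {1..k}"
  shows "fmass \<Omega> f (B i) \<le> (\<integral>x\<in>\<Omega>. f x \<partial>lebesgue)"
  using member_le_sum[OF assms(4), of "\<lambda>i. fmass \<Omega> f (B i)"] fmass_nonneg[OF assms(2)]
    sum_fmass_partition[OF assms(1-3)] by auto

lemma is_equilibrium_AE_cost_le_cell_cost:
  assumes "is_equilibrium \<Omega> f k xs p h A"
  shows "AE x in fmeas \<Omega> f. \<forall>i\<in>{1..k}. cost \<Omega> f k xs p h A x \<le> cell_cost \<Omega> f xs p h A i x"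
proof -
  have partition: "is_partition \<Omega> f k A"
    using assms by (simp add: is_equilibrium_def)
  have "AE x in fmeas \<Omega> f. \<forall>i\<in>{1..k}. x \<in> A i \<longrightarrow>
      (\<forall>j\<in>{1..k}. j \<noteq> i \<longrightarrow> cell_cost \<Omega> f xs p h A i x < cell_cost \<Omega> f xs p h A j x)"
  proof (intro AE_finite_allI finite_atLeastAtMost)
    fix i assume i: "i \<in> {1..k}"
    define E where "E = {x. \<forall>j\<in>{1..k}. j \<noteq> i \<longrightarrow>
      cell_cost \<Omega> f xs p h A i x < cell_cost \<Omega> f xs p h A j x}"
    have "Measurable.pred borel (\<lambda>x. \<forall>j\<in>{1..k}. j \<noteq> i \<longrightarrow>
      norm (x - xs i) powr p + c i < norm (x - xs j) powr p + c j)" for c :: "nat \<Rightarrow> real"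
      by measurable
    from this[of "\<lambda>j. h j (fmass \<Omega> f (A j))"] have "E \<in> sets borel"
      by (simp add: E_def cell_cost_def pred_def)
    moreover have "A i \<in> sets borel"
      using partition i unfolding is_partition_def by blast
    \<comment> \<open>measurability matters: \<open>emeasure\<close> vanishes on non-measurable sets by convention\<close>
    ultimately have "(A i - E) \<union> (E - A i) \<in> sets lebesgue"
      by (intro sets_lebesgue_if_borel sets.Un sets.Diff)
    moreover have "emeasure (fmeas \<Omega> f) ((A i - E) \<union> (E - A i)) = 0"
      using assms i unfolding is_equilibrium_def E_def cell_cost_def Let_def by simp
    ultimately have "(A i - E) \<union> (E - A i) \<in> null_sets (fmeas \<Omega> f)"
      by (simp add: null_sets_def)
    from AE_not_in[OF this]
    show "AE x in fmeas \<Omega> f. x \<in> A i \<longrightarrow>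
      (\<forall>j\<in>{1..k}. j \<noteq> i \<longrightarrow> cell_cost \<Omega> f xs p h A i x < cell_cost \<Omega> f xs p h A j x)"
      by eventually_elim (auto simp: E_def)
  qed
  with is_partition_AE_single_cell[OF partition]
    is_partition_AE_cost_eq_cell_cost[OF partition, of xs p h]
  show ?thesis
  proof eventually_elim
    case (elim x)
    then obtain j where j: "j \<in> {1..k}" "x \<in> A j" "cost \<Omega> f k xs p h A x = cell_cost \<Omega> f xs p h A j x"
      by blast
    have "cell_cost \<Omega> f xs p h A j x \<le> cell_cost \<Omega> f xs p h A i x" if "i \<in> {1..k}" for i
      using that j elim by (cases "i = j") (auto intro: less_imp_le)
    with j show ?case
      by simp
  qed
qed

lemma is_equilibrium_improvement_mass_le:
  assumes "set_integrable lebesgue \<Omega> f" "\<forall>x\<in>\<Omega>. f x \<ge> 0"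
    and "(\<integral>x\<in>\<Omega>. f x \<partial>lebesgue) = 1"
    and "\<forall>i\<in>{1..k}. strict_mono_on {0..1} (h i)"
    and A: "is_equilibrium \<Omega> f k xs p h A"
    and B: "is_partition \<Omega> f k B"
    and improves: "AE x in fmeas \<Omega> f. cost \<Omega> f k xs p h B x \<le> cost \<Omega> f k xs p h A x"
    and i: "i \<in> {1..k}"
  shows "fmass \<Omega> f (B i) \<le> fmass \<Omega> f (A i)"
proof (rule ccontr)
  assume gains: "\<not> ?thesis"
  have "is_partition \<Omega> f k A"
    using A by (simp add: is_equilibrium_def)
  then have "fmass \<Omega> f (A i) \<in> {0..1}" "fmass \<Omega> f (B i) \<in> {0..1}"
    using fmass_nonneg[OF assms(2)] fmass_partition_le[OF assms(1,2) _ i] assms(3) B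
    by auto
  moreover have "strict_mono_on {0..1} (h i)"
    using assms(4) i by blast
  ultimately have "h i (fmass \<Omega> f (A i)) < h i (fmass \<Omega> f (B i))"
    using gains by (metis not_le strict_mono_onD)
  then have worse: "cell_cost \<Omega> f xs p h A i x < cell_cost \<Omega> f xs p h B i x" for x
    by (simp add: cell_cost_def)
  have "AE x in fmeas \<Omega> f. x \<notin> B i"
    using is_partition_AE_cost_eq_cell_cost[OF B, of xs p h]
      is_equilibrium_AE_cost_le_cell_cost[OF A] improves
  proof eventually_elim
    case (elim x)
    show "x \<notin> B i"
    proof
      assume "x \<in> B i"
      with elim i have "cost \<Omega> f k xs p h B x = cell_cost \<Omega> f xs p h B i x"
        and "cost \<Omega> f k xs p h A x \<le> cell_cost \<Omega> f xs p h A i x"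
        by blast+
      with elim worse[of x] show False
        by linarith
    qed
  qed
  then have "fmass \<Omega> f (B i) = 0"
    by (rule fmass_eq_0_if_AE_notin[OF assms(1,2)])
  then show False
    using gains fmass_nonneg[OF assms(2)] by simp
qed

lemma is_equilibrium_AE_cost_le_if_same_masses:
  assumes A: "is_equilibrium \<Omega> f k xs p h A" and B: "is_partition \<Omega> f k B"
    and same_masses: "\<forall>i\<in>{1..k}. fmass \<Omega> f (B i) = fmass \<Omega> f (A i)"
  shows "AE x in fmeas \<Omega> f. cost \<Omega> f k xs p h A x \<le> cost \<Omega> f k xs p h B x"
  using is_partition_AE_single_cell[OF B] is_partition_AE_cost_eq_cell_cost[OF B, of xs p h]
    is_equilibrium_AE_cost_le_cell_cost[OF A]
proof eventually_elim
  case (elim x)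
  then obtain j where j: "j \<in> {1..k}" "cost \<Omega> f k xs p h B x = cell_cost \<Omega> f xs p h B j x"
    by blast
  moreover from same_masses j(1) have "cell_cost \<Omega> f xs p h B j x = cell_cost \<Omega> f xs p h A j x"
    by (simp add: cell_cost_def)
  moreover from elim j(1) have "cost \<Omega> f k xs p h A x \<le> cell_cost \<Omega> f xs p h A j x"
    by blast
  ultimately show ?case
    by simp
qed

theorem corollary4p10:
  fixes \<Omega> :: "'a::euclidean_space set" and f :: "'a \<Rightarrow> real"
    and k :: nat and xs :: "nat \<Rightarrow> 'a" and p :: real
    and h :: "nat \<Rightarrow> real \<Rightarrow> real" and A :: "nat \<Rightarrow> 'a set"
  assumes "\<Omega> \<in> sets borel" and "bounded \<Omega>"
    and "\<forall>x\<in>\<Omega>. f x \<ge> 0"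
    and "set_integrable lebesgue \<Omega> f"
    and "(\<integral>x\<in>\<Omega>. f x \<partial>lebesgue) = 1"
    and "p \<ge> 1"
    and "\<forall>i\<in>{1..k}. xs i \<in> \<Omega>"
    and "\<forall>i\<in>{1..k}. strict_mono_on {0..1} (h i)"
    and "\<forall>i\<in>{1..k}. \<forall>t\<in>{0..1}. h i t \<ge> 0"
    and "is_equilibrium \<Omega> f k xs p h A"
  shows "is_pareto \<Omega> f k xs p h A"
  unfolding is_pareto_def
proof (intro conjI notI)
  show A: "is_partition \<Omega> f k A"
    using assms(10) by (simp add: is_equilibrium_def)
  assume "\<exists>B. is_partition \<Omega> f k B \<and>
    (AE x in fmeas \<Omega> f. cost \<Omega> f k xs p h B x \<le> cost \<Omega> f k xs p h A x) \<and>
    emeasure (fmeas \<Omega> f) {x. cost \<Omega> f k xs p h B x < cost \<Omega> f k xs p h A x} > 0"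
  then obtain B where B: "is_partition \<Omega> f k B"
    and improves: "AE x in fmeas \<Omega> f. cost \<Omega> f k xs p h B x \<le> cost \<Omega> f k xs p h A x"
    and strict: "emeasure (fmeas \<Omega> f) {x. cost \<Omega> f k xs p h B x < cost \<Omega> f k xs p h A x} > 0"
    by blast
  have "(\<Sum>i\<in>{1..k}. fmass \<Omega> f (B i)) = (\<Sum>i\<in>{1..k}. fmass \<Omega> f (A i))"
    using sum_fmass_partition[OF assms(4,3)] A B by simp
  from sum_mono_inv[OF this is_equilibrium_improvement_mass_le[OF assms(4,3,5,8,10) B improves]]
  have "\<forall>i\<in>{1..k}. fmass \<Omega> f (B i) = fmass \<Omega> f (A i)"
    by blast
  from is_equilibrium_AE_cost_le_if_same_masses[OF assms(10) B this]
  have "AE x in fmeas \<Omega> f. \<not> cost \<Omega> f k xs p h B x < cost \<Omega> f k xs p h A x"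
    by eventually_elim simp
  from emeasure_eq_0_AE[OF this] strict show False
    by simp
qed

end
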